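(* Let $f=(u,f_2(u,v),f_3(u,v)):(\mathbb R^2,0)\to(\mathbb R^3,0)$ be a smooth germ with $f_v(0,0)=0$ and $j^2f(0)$ $\mathcal A^2$-equivalent to $(u,v^2,0)$, and suppose $(f_2)_{vv}(0,0)\ne0$. Let $v(u)$ be the smooth function with $v(0)=0$ and $(f_2)_v(u,v(u))=0$ for all $u$ near $0$. Then $f$ is a frontal near $(0,0)$ if and only if $(f_3)_v(u,v(u))=0$ for all $u$ near $0$.
   Context: A map germ $f:(\mathbb R^2,0)\to(\mathbb R^3,0)$ is a frontal if there exists a smooth unit vector field $\nu$ along $f$ with $\langle df(X),\nu\rangle=0$ for all tangent vectors $X$. $\mathcal A^2$-equivalence of 2-jets means equivalence under 2-jets of diffeomorphism germs of source and target. *)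

theory Defs
  imports "HOL-Analysis.Analysis"
begin

fun dd :: "'a::real_normed_vector list \<Rightarrow> ('a \<Rightarrow> 'b::real_normed_vector) \<Rightarrow> 'a \<Rightarrow> 'b" where
  "dd [] f = f"
| "dd (h # hs) f = (\<lambda>x. frechet_derivative (dd hs f) (at x) h)"

definition smooth_on :: "'a::real_normed_vector set \<Rightarrow> ('a \<Rightarrow> 'b::real_normed_vector) \<Rightarrow> bool" where
  "smooth_on S f \<longleftrightarrow> open S \<and> (\<forall>hs. \<forall>x\<in>S. dd hs f differentiable (at x))"

definition smooth_near :: "'a::real_normed_vector \<Rightarrow> ('a \<Rightarrow> 'b::real_normed_vector) \<Rightarrow> bool" where
  "smooth_near a f \<longleftrightarrow> (\<exists>U. a \<in> U \<and> smooth_on U f)"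

definition diffeo_germ0 :: "('a::euclidean_space \<Rightarrow> 'a) \<Rightarrow> bool" where
  "diffeo_germ0 \<phi> \<longleftrightarrow> \<phi> 0 = 0 \<and>
     (\<exists>U V g. 0 \<in> U \<and> smooth_on U \<phi> \<and> smooth_on V g \<and> \<phi> ` U = V \<and>
        (\<forall>x\<in>U. g (\<phi> x) = x) \<and> (\<forall>y\<in>V. \<phi> (g y) = y))"

definition same_2jet0 :: "('a::real_normed_vector \<Rightarrow> 'b::real_normed_vector) \<Rightarrow> ('a \<Rightarrow> 'b) \<Rightarrow> bool" where
  "same_2jet0 f g \<longleftrightarrow> (\<forall>hs. length hs \<le> 2 \<longrightarrow> dd hs f 0 = dd hs g 0)"

text \<open>A^2-equivalence of the 2-jets at 0 of map germs (R^2,0) -> (R^3,0): the 2-jets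
are related by 2-jets of diffeomorphism germs of source and target (represented by
diffeomorphism germs).\<close>
definition A2_equiv :: "(real \<times> real \<Rightarrow> real \<times> real \<times> real) \<Rightarrow> (real \<times> real \<Rightarrow> real \<times> real \<times> real) \<Rightarrow> bool" where
  "A2_equiv f g \<longleftrightarrow> (\<exists>\<phi> \<psi>. diffeo_germ0 \<phi> \<and> diffeo_germ0 \<psi> \<and> same_2jet0 (\<psi> \<circ> f \<circ> \<phi>) g)"

definition frontal_near0 :: "(real \<times> real \<Rightarrow> real \<times> real \<times> real) \<Rightarrow> bool" where
  "frontal_near0 f \<longleftrightarrow> (\<exists>U \<nu>. 0 \<in> U \<and> smooth_on U \<nu> \<and> (\<forall>p\<in>U. norm (\<nu> p) = 1) \<and>
     (\<forall>p\<in>U. \<forall>X. inner (frechet_derivative f (at p) X) (\<nu> p) = 0))"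

end

theory Submission
  imports Defs
begin

text \<open>
  If \<open>\<nu>\<close> is a unit normal along \<open>f = (u, f\<^sub>2, f\<^sub>3)\<close>, then \<open>\<langle>f\<^sub>v, \<nu>\<rangle> = 0\<close>;
  differentiating once more in \<open>v\<close> at the origin, where \<open>f\<^sub>v = 0\<close>, shows that \<open>\<nu>\<close> is also
  orthogonal to \<open>f\<^sub>v\<^sub>v\<close>. Together with \<open>(f\<^sub>2)\<^sub>v\<^sub>v(0, 0) \<noteq> 0\<close> and
  \<open>\<langle>f\<^sub>u, \<nu>\<rangle> = 0\<close> this forces \<open>\<nu>\<^sub>3 \<noteq> 0\<close> near the origin, and then on the critical curve,
  where \<open>(f\<^sub>2)\<^sub>v = 0\<close>, orthogonality to \<open>f\<^sub>v\<close> leaves \<open>(f\<^sub>3)\<^sub>v = 0\<close>.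

  Conversely, if \<open>(f\<^sub>2)\<^sub>v\<close> and \<open>(f\<^sub>3)\<^sub>v\<close> vanish along \<open>v = v(u)\<close>, Hadamard's lemma writes
  them as \<open>(v - v(u)) a\<close> and \<open>(v - v(u)) b\<close> with smooth \<open>a\<close>, \<open>b\<close> and
  \<open>a(0, 0) = (f\<^sub>2)\<^sub>v\<^sub>v(0, 0) \<noteq> 0\<close>. The nowhere vanishing field
  \<open>((f\<^sub>2)\<^sub>u b - (f\<^sub>3)\<^sub>u a, -b, a)\<close> is orthogonal to \<open>f\<^sub>u\<close> and \<open>f\<^sub>v\<close>, and its normalisation
  is a smooth unit normal.

  Smoothness is handled through \<open>C\<^sup>k\<close> classes, closed under the algebraic operations and
  composition by induction on \<open>k\<close>; Hadamard's lemma uses the integrals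
  \<open>\<integral>\<^sub>0\<^sup>1 t\<^sup>n K(u, t v) dt\<close>, whose derivatives are again integrals of this kind.
\<close>

section \<open>Iterated directional derivatives\<close>

lemma dd_append: "dd (hs @ [h]) f = dd hs (dd [h] f)"
  by (induction hs) auto

lemma dd_Cons: "dd (h # hs) f = dd [h] (dd hs f)"
  by simp

lemma dd_single: "dd [h] f x = frechet_derivative f (at x) h"
  by simp

declare dd.simps(2) [simp del]

lemma dd_eq_derivative: "(f has_derivative D) (at x) \<Longrightarrow> dd [h] f x = D h"
  by (simp add: dd_single frechet_derivative_at [symmetric])

lemma has_derivative_dd:
  "f differentiable (at x) \<Longrightarrow> (f has_derivative (\<lambda>h. dd [h] f x)) (at x)"
  by (simp add: dd_single frechet_derivative_works [symmetric])

lemma dd_cong_open: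
  assumes "open S" "\<And>y. y \<in> S \<Longrightarrow> f y = g y" "x \<in> S"
  shows "dd hs f x = dd hs g x"
  using assms(3)
proof (induction hs arbitrary: x)
  case (Cons h hs)
  have "frechet_derivative (dd hs f) (at x) = frechet_derivative (dd hs g) (at x)"
    unfolding frechet_derivative_def
    using has_derivative_transform_within_open [OF _ \<open>open S\<close> Cons.prems] Cons.IH by metis
  then show ?case by (simp add: dd.simps(2))
qed (use assms in simp)

lemma dd_euclidean_expansion:
  fixes g :: "'a::euclidean_space \<Rightarrow> 'b::real_normed_vector"
  assumes "g differentiable (at y)"
  shows "dd [k] g y = (\<Sum>i\<in>Basis. (k \<bullet> i) *\<^sub>R dd [i] g y)"
proof -
  have lin: "linear (\<lambda>k. dd [k] g y)"
    using has_derivative_dd [OF assms] has_derivative_linear by blast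
  have "dd [k] g y = dd [\<Sum>i\<in>Basis. (k \<bullet> i) *\<^sub>R i] g y"
    by (simp add: euclidean_representation)
  also have "\<dots> = (\<Sum>i\<in>Basis. (k \<bullet> i) *\<^sub>R dd [i] g y)"
    by (simp add: linear_sum [OF lin] linear_cmul [OF lin])
  finally show ?thesis .
qed

lemma dd_Pair_expansion:
  fixes g :: "real \<times> real \<Rightarrow> 'b::real_normed_vector"
  assumes "g differentiable (at y)"
  shows "dd [(s, t)] g y = s *\<^sub>R dd [(1, 0)] g y + t *\<^sub>R dd [(0, 1)] g y"
proof -
  have lin: "linear (\<lambda>k. dd [k] g y)"
    using has_derivative_dd [OF assms] has_derivative_linear by blast
  have "(s, t) = s *\<^sub>R (1, 0) + t *\<^sub>R (0::real, 1::real)"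
    by simp
  then show ?thesis
    by (metis linear_add [OF lin] linear_cmul [OF lin])
qed

section \<open>Finitely and infinitely differentiable functions\<close>

definition differentiable_upto ::
    "nat \<Rightarrow> 'a::real_normed_vector set \<Rightarrow> ('a \<Rightarrow> 'b::real_normed_vector) \<Rightarrow> bool" where
  "differentiable_upto k S f \<longleftrightarrow>
     open S \<and> (\<forall>hs. length hs < k \<longrightarrow> (\<forall>x\<in>S. dd hs f differentiable (at x)))"

lemma smooth_on_iff_differentiable_upto: "smooth_on S f \<longleftrightarrow> (\<forall>k. differentiable_upto k S f)"
  unfolding smooth_on_def differentiable_upto_def by (metis lessI)

lemma differentiable_upto_0 [simp]: "differentiable_upto 0 S f \<longleftrightarrow> open S"
  by (simp add: differentiable_upto_def)

lemma differentiable_upto_Suc: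
  fixes f :: "'a::real_normed_vector \<Rightarrow> 'b::real_normed_vector"
  shows "differentiable_upto (Suc k) S f \<longleftrightarrow>
     open S \<and> (\<forall>x\<in>S. f differentiable (at x)) \<and> (\<forall>h. differentiable_upto k S (dd [h] f))"
proof -
  have split: "(\<forall>hs. length hs < Suc k \<longrightarrow> P hs) \<longleftrightarrow> P [] \<and> (\<forall>h hs. length hs < k \<longrightarrow> P (hs @ [h]))"
    for P :: "'a list \<Rightarrow> bool"
  proof (intro iffI conjI allI impI)
    fix hs :: "'a list" assume "P [] \<and> (\<forall>h hs. length hs < k \<longrightarrow> P (hs @ [h]))" "length hs < Suc k"
    then show "P hs" by (cases hs rule: rev_exhaust) auto
  qed auto
  show ?thesis
    unfolding differentiable_upto_def split by (auto simp: dd_append)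
qed

lemma differentiable_upto_SucD: "differentiable_upto (Suc k) S f \<Longrightarrow> differentiable_upto k S f"
  by (simp add: differentiable_upto_def)

lemma differentiable_upto_open: "differentiable_upto k S f \<Longrightarrow> open S"
  by (simp add: differentiable_upto_def)

lemma differentiable_upto_cong:
  fixes f :: "'a::real_normed_vector \<Rightarrow> 'b::real_normed_vector"
  assumes f: "differentiable_upto k S f" and eq: "\<And>x. x \<in> S \<Longrightarrow> f x = g x"
  shows "differentiable_upto k S g"
  unfolding differentiable_upto_def
proof (intro conjI allI impI ballI)
  show S: "open S" using differentiable_upto_open [OF f] .
  fix hs :: "'a list" and x assume "length hs < k" "x \<in> S"
  then have "dd hs f differentiable (at x)"
    using f by (simp add: differentiable_upto_def)
  moreover have "\<And>y. y \<in> S \<Longrightarrow> dd hs f y = dd hs g y"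
    using dd_cong_open [of S f g] S eq by blast
  ultimately show "dd hs g differentiable (at x)"
    using has_derivative_transform_within_open [OF _ S \<open>x \<in> S\<close>] by (metis differentiable_def)
qed

lemma differentiable_upto_SucI:
  assumes S: "open S"
    and D: "\<And>x. x \<in> S \<Longrightarrow> (f has_derivative (\<lambda>h. D h x)) (at x)"
    and k: "\<And>h. differentiable_upto k S (D h)"
  shows "differentiable_upto (Suc k) S f"
  unfolding differentiable_upto_Suc
proof (intro conjI ballI allI S)
  show "f differentiable (at x)" if "x \<in> S" for x
    using D [OF that] by (rule differentiableI)
  show "differentiable_upto k S (dd [h] f)" for h
    using differentiable_upto_cong [OF k] dd_eq_derivative [OF D] by metis
qed

lemma differentiable_upto_const: "open S \<Longrightarrow> differentiable_upto k S (\<lambda>x. c)"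
proof (induction k arbitrary: c)
  case (Suc k)
  show ?case
    by (rule differentiable_upto_SucI [where D = "\<lambda>h x. 0"]) (use Suc in auto)
qed simp

lemma differentiable_upto_add:
  "differentiable_upto k S f \<Longrightarrow> differentiable_upto k S g \<Longrightarrow>
     differentiable_upto k S (\<lambda>x. f x + g x)"
proof (induction k arbitrary: f g)
  case (Suc k)
  show ?case
  proof (rule differentiable_upto_SucI [where D = "\<lambda>h x. dd [h] f x + dd [h] g x"])
    show "open S" using Suc.prems by (simp add: differentiable_upto_Suc)
    show "((\<lambda>x. f x + g x) has_derivative (\<lambda>h. dd [h] f x + dd [h] g x)) (at x)" if "x \<in> S" for x
      using Suc.prems that by (auto simp: differentiable_upto_Suc intro!: has_derivative_add has_derivative_dd)
    show "differentiable_upto k S (\<lambda>x. dd [h] f x + dd [h] g x)" for h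
      using Suc by (simp add: differentiable_upto_Suc)
  qed
qed simp

lemma differentiable_upto_scaleR:
  "differentiable_upto k S f \<Longrightarrow> differentiable_upto k S g \<Longrightarrow>
     differentiable_upto k S (\<lambda>x. f x *\<^sub>R g x)"
proof (induction k arbitrary: f g)
  case (Suc k)
  note f = Suc.prems(1) [unfolded differentiable_upto_Suc]
    and g = Suc.prems(2) [unfolded differentiable_upto_Suc]
  have fk: "differentiable_upto k S f" and gk: "differentiable_upto k S g"
    using Suc.prems by (simp_all add: differentiable_upto_SucD)
  show ?case
  proof (rule differentiable_upto_SucI [where D = "\<lambda>h x. f x *\<^sub>R dd [h] g x + dd [h] f x *\<^sub>R g x"])
    show "open S" using f by simp
    show "((\<lambda>x. f x *\<^sub>R g x) has_derivative (\<lambda>h. f x *\<^sub>R dd [h] g x + dd [h] f x *\<^sub>R g x)) (at x)"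
      if "x \<in> S" for x
      using has_derivative_scaleR [OF has_derivative_dd has_derivative_dd] f g that by blast
    show "differentiable_upto k S (\<lambda>x. f x *\<^sub>R dd [h] g x + dd [h] f x *\<^sub>R g x)" for h
      using f g by (intro differentiable_upto_add Suc.IH fk gk) simp_all
  qed
qed simp

lemma differentiable_upto_mult:
  fixes f g :: "'a::real_normed_vector \<Rightarrow> real"
  shows "differentiable_upto k S f \<Longrightarrow> differentiable_upto k S g \<Longrightarrow>
     differentiable_upto k S (\<lambda>x. f x * g x)"
  using differentiable_upto_scaleR [of k S f g] by simp

lemma differentiable_upto_sum:
  assumes "finite I" "open S" "\<And>i. i \<in> I \<Longrightarrow> differentiable_upto k S (f i)"
  shows "differentiable_upto k S (\<lambda>x. \<Sum>i\<in>I. f i x)"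
  using assms
  by (induction I rule: finite_induct) (auto intro: differentiable_upto_const differentiable_upto_add)

lemma differentiable_upto_bounded_linear_compose:
  "bounded_linear L \<Longrightarrow> differentiable_upto k S f \<Longrightarrow> differentiable_upto k S (\<lambda>x. L (f x))"
proof (induction k arbitrary: f)
  case (Suc k)
  note f = Suc.prems(2) [unfolded differentiable_upto_Suc]
  show ?case
  proof (rule differentiable_upto_SucI [where D = "\<lambda>h x. L (dd [h] f x)"])
    show "open S" using f by simp
    show "((\<lambda>x. L (f x)) has_derivative (\<lambda>h. L (dd [h] f x))) (at x)" if "x \<in> S" for x
      using f that by (intro bounded_linear.has_derivative [OF Suc.prems(1)] has_derivative_dd) simp
    show "differentiable_upto k S (\<lambda>x. L (dd [h] f x))" for h
      using Suc.IH [OF Suc.prems(1)] f by blast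
  qed
qed simp

text \<open>In coordinates the chain rule reads
  \<open>D (g \<circ> a) h = (\<Sum>i. (D a h \<bullet> i) *\<^sub>R (D\<^sub>i g) \<circ> a)\<close>: only derivatives of \<open>g\<close> in the
  fixed basis directions occur, which is what lets the induction on \<open>k\<close> go through.\<close>
lemma differentiable_upto_compose:
  fixes g :: "'c::euclidean_space \<Rightarrow> 'b::real_normed_vector"
  assumes "differentiable_upto k S a" "differentiable_upto k T g" "\<And>x. x \<in> S \<Longrightarrow> a x \<in> T"
  shows "differentiable_upto k S (\<lambda>x. g (a x))"
  using assms
proof (induction k arbitrary: a g)
  case (Suc k)
  note a = Suc.prems(1) [unfolded differentiable_upto_Suc]
    and g = Suc.prems(2) [unfolded differentiable_upto_Suc]
  show ?case
  proof (rule differentiable_upto_SucI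
      [where D = "\<lambda>h x. \<Sum>i\<in>Basis. (dd [h] a x \<bullet> i) *\<^sub>R dd [i] g (a x)"])
    show "open S" using a by simp
    show "((\<lambda>x. g (a x)) has_derivative (\<lambda>h. \<Sum>i\<in>Basis. (dd [h] a x \<bullet> i) *\<^sub>R dd [i] g (a x))) (at x)"
      if x: "x \<in> S" for x
    proof -
      have ax: "a differentiable (at x)"
        using a x by blast
      have ga: "g differentiable (at (a x))"
        using g Suc.prems(3) [OF x] by blast
      have "((\<lambda>x. g (a x)) has_derivative (\<lambda>h. dd [dd [h] a x] g (a x))) (at x)"
        using diff_chain_at [OF has_derivative_dd [OF ax] has_derivative_dd [OF ga]]
        by (simp add: o_def)
      moreover have "(\<lambda>h. dd [dd [h] a x] g (a x)) = (\<lambda>h. \<Sum>i\<in>Basis. (dd [h] a x \<bullet> i) *\<^sub>R dd [i] g (a x))"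
        by (rule ext) (rule dd_euclidean_expansion [OF ga])
      ultimately show ?thesis
        by (simp only:)
    qed
    show "differentiable_upto k S (\<lambda>x. \<Sum>i\<in>Basis. (dd [h] a x \<bullet> i) *\<^sub>R dd [i] g (a x))" for h
    proof (rule differentiable_upto_sum [OF finite_Basis])
      show "open S" using a by simp
      fix i :: 'c
      have ak: "differentiable_upto k S a"
        using Suc.prems(1) by (rule differentiable_upto_SucD)
      have "differentiable_upto k S (\<lambda>x. dd [h] a x \<bullet> i)"
        using a by (intro differentiable_upto_bounded_linear_compose [OF bounded_linear_inner_left]) simp
      moreover have "differentiable_upto k S (\<lambda>x. dd [i] g (a x))"
        by (rule Suc.IH [OF ak]) (use g Suc.prems(3) in auto)
      ultimately show "differentiable_upto k S (\<lambda>x. (dd [h] a x \<bullet> i) *\<^sub>R dd [i] g (a x))"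
        by (rule differentiable_upto_scaleR)
    qed
  qed
qed simp

lemma smooth_on_open: "smooth_on S f \<Longrightarrow> open S"
  by (simp add: smooth_on_def)

lemma smooth_on_differentiable: "smooth_on S f \<Longrightarrow> x \<in> S \<Longrightarrow> f differentiable (at x)"
  unfolding smooth_on_def by (metis dd.simps(1))

lemma smooth_on_continuous: "smooth_on S f \<Longrightarrow> continuous_on S f"
  by (meson continuous_at_imp_continuous_on differentiable_imp_continuous_within
      smooth_on_differentiable)

lemma smooth_on_dd: "smooth_on S f \<Longrightarrow> smooth_on S (dd [h] f)"
  unfolding smooth_on_def by (metis dd_append)

lemma smooth_on_subset: "smooth_on S f \<Longrightarrow> open T \<Longrightarrow> T \<subseteq> S \<Longrightarrow> smooth_on T f"
  unfolding smooth_on_def by auto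

lemma smooth_on_const: "open S \<Longrightarrow> smooth_on S (\<lambda>x. c)"
  by (simp add: smooth_on_iff_differentiable_upto differentiable_upto_const)

lemma smooth_on_bounded_linear:
  assumes "open S" "bounded_linear L"
  shows "smooth_on S L"
  unfolding smooth_on_iff_differentiable_upto
proof
  fix k show "differentiable_upto k S L"
  proof (cases k)
    case (Suc k')
    show ?thesis unfolding Suc
      by (rule differentiable_upto_SucI [where D = "\<lambda>h x. L h"])
        (use assms in \<open>auto intro: bounded_linear_imp_has_derivative differentiable_upto_const\<close>)
  qed (use assms in simp)
qed

lemma smooth_on_add: "smooth_on S f \<Longrightarrow> smooth_on S g \<Longrightarrow> smooth_on S (\<lambda>x. f x + g x)"
  by (simp add: smooth_on_iff_differentiable_upto differentiable_upto_add)

lemma smooth_on_scaleR: "smooth_on S f \<Longrightarrow> smooth_on S g \<Longrightarrow> smooth_on S (\<lambda>x. f x *\<^sub>R g x)"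
  by (simp add: smooth_on_iff_differentiable_upto differentiable_upto_scaleR)

lemma smooth_on_mult:
  fixes f g :: "'a::real_normed_vector \<Rightarrow> real"
  shows "smooth_on S f \<Longrightarrow> smooth_on S g \<Longrightarrow> smooth_on S (\<lambda>x. f x * g x)"
  by (simp add: smooth_on_iff_differentiable_upto differentiable_upto_mult)

lemma smooth_on_sum:
  "finite I \<Longrightarrow> open S \<Longrightarrow> (\<And>i. i \<in> I \<Longrightarrow> smooth_on S (f i)) \<Longrightarrow>
     smooth_on S (\<lambda>x. \<Sum>i\<in>I. f i x)"
  by (simp add: smooth_on_iff_differentiable_upto differentiable_upto_sum)

lemma smooth_on_bounded_linear_compose:
  "bounded_linear L \<Longrightarrow> smooth_on S f \<Longrightarrow> smooth_on S (\<lambda>x. L (f x))"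
  by (simp add: smooth_on_iff_differentiable_upto differentiable_upto_bounded_linear_compose)

lemma smooth_on_minus: "smooth_on S f \<Longrightarrow> smooth_on S (\<lambda>x. - f x)"
  by (rule smooth_on_bounded_linear_compose [OF bounded_linear_minus [OF bounded_linear_ident]])

lemma smooth_on_diff: "smooth_on S f \<Longrightarrow> smooth_on S g \<Longrightarrow> smooth_on S (\<lambda>x. f x - g x)"
  using smooth_on_add [OF _ smooth_on_minus, of S f g] by simp

lemma smooth_on_compose:
  fixes g :: "'c::euclidean_space \<Rightarrow> 'b::real_normed_vector"
  assumes "smooth_on S a" "smooth_on T g" "\<And>x. x \<in> S \<Longrightarrow> a x \<in> T"
  shows "smooth_on S (\<lambda>x. g (a x))"
  using assms differentiable_upto_compose [of _ S a T g]
  by (simp add: smooth_on_iff_differentiable_upto)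

lemma smooth_on_Pair:
  assumes "smooth_on S f" "smooth_on S g"
  shows "smooth_on S (\<lambda>x. (f x, g x))"
proof -
  have "smooth_on S (\<lambda>x. (f x, 0))"
    by (rule smooth_on_bounded_linear_compose
        [OF bounded_linear_Pair [OF bounded_linear_ident bounded_linear_zero] assms(1)])
  moreover have "smooth_on S (\<lambda>x. (0, g x))"
    by (rule smooth_on_bounded_linear_compose
        [OF bounded_linear_Pair [OF bounded_linear_zero bounded_linear_ident] assms(2)])
  ultimately have "smooth_on S (\<lambda>x. (f x, 0) + (0, g x))"
    by (rule smooth_on_add)
  then show ?thesis by simp
qed

lemma smooth_on_powr: "smooth_on {0<..} (\<lambda>s::real. s powr r)"
  unfolding smooth_on_iff_differentiable_upto
proof
  fix k show "differentiable_upto k {0<..} (\<lambda>s::real. s powr r)"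
  proof (induction k arbitrary: r)
    case (Suc k)
    show ?case
    proof (rule differentiable_upto_SucI [where D = "\<lambda>h s. (r * h) * s powr (r - 1)"])
      show "((\<lambda>s. s powr r) has_derivative (\<lambda>h. (r * h) * s powr (r - 1))) (at s)"
        if "s \<in> {0<..}" for s
      proof -
        have "((\<lambda>s. s powr r) has_derivative (*) (r * s powr (r - 1))) (at s)"
          using that by (intro has_field_derivative_imp_has_derivative has_real_derivative_powr) simp
        then show ?thesis
          by (rule has_derivative_eq_rhs) (simp add: fun_eq_iff mult_ac)
      qed
      show "differentiable_upto k {0<..} (\<lambda>s. (r * h) * s powr (r - 1))" for h
        by (intro differentiable_upto_mult differentiable_upto_const Suc.IH) simp
    qed simp
  qed simp
qed

lemma smooth_on_sgn:
  fixes N :: "'a::real_normed_vector \<Rightarrow> 'b::euclidean_space"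
  assumes N: "smooth_on S N" and nonzero: "\<And>x. x \<in> S \<Longrightarrow> N x \<noteq> 0"
  shows "smooth_on S (\<lambda>x. sgn (N x))"
proof -
  define q where "q x = (\<Sum>i\<in>Basis. (N x \<bullet> i) * (N x \<bullet> i))" for x
  have q_norm: "q x = (norm (N x))\<^sup>2" for x
    unfolding q_def power2_norm_eq_inner by (rule euclidean_inner [symmetric])
  have "smooth_on S q"
    unfolding q_def
  proof (rule smooth_on_sum [OF finite_Basis smooth_on_open [OF N]])
    fix i :: 'b
    have Ni: "smooth_on S (\<lambda>x. N x \<bullet> i)"
      by (rule smooth_on_bounded_linear_compose [OF bounded_linear_inner_left N])
    show "smooth_on S (\<lambda>x. (N x \<bullet> i) * (N x \<bullet> i))"
      by (rule smooth_on_mult [OF Ni Ni])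
  qed
  then have "smooth_on S (\<lambda>x. q x powr - (1 / 2))"
    by (rule smooth_on_compose [OF _ smooth_on_powr]) (use nonzero in \<open>simp add: q_norm\<close>)
  then have "smooth_on S (\<lambda>x. q x powr - (1 / 2) *\<^sub>R N x)"
    using N by (rule smooth_on_scaleR)
  moreover have "q x powr - (1 / 2) *\<^sub>R N x = sgn (N x)" for x
  proof -
    have "q x powr - (1 / 2) = 1 / sqrt (q x)"
      by (simp add: powr_minus_divide powr_half_sqrt q_norm)
    also have "\<dots> = inverse (norm (N x))"
      by (simp add: q_norm divide_inverse)
    finally show ?thesis
      by (simp add: sgn_div_norm)
  qed
  ultimately show ?thesis by simp
qed

section \<open>Hadamard's lemma\<close>

text \<open>Differentiation in \<open>v\<close> raises the weight \<open>t\<^sup>n\<close>, so these integrals are closed under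
  differentiation.\<close>
definition hadamard_integral :: "nat \<Rightarrow> (real \<times> real \<Rightarrow> real) \<Rightarrow> real \<times> real \<Rightarrow> real" where
  "hadamard_integral n K p = integral {0..1} (\<lambda>t. t ^ n * K (fst p, t * snd p))"

lemma vertical_contraction_in_ball:
  assumes p: "p \<in> ball 0 r" and t: "t \<in> {0..1}"
  shows "(fst p, t * snd p) \<in> ball (0 :: real \<times> real) r"
proof -
  obtain u v where uv: "p = (u, v)"
    by (cases p)
  have "t\<^sup>2 \<le> 1"
    using t by (simp add: power_le_one)
  then have "(t * v)\<^sup>2 \<le> v\<^sup>2"
    by (simp add: power_mult_distrib mult_left_le_one_le)
  then have "norm (u, t * v) \<le> norm (u, v)"
    by (simp add: norm_Pair uv)
  then show ?thesis
    using p by (simp add: uv)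
qed

lemma continuous_on_hadamard_integrand:
  fixes K :: "real \<times> real \<Rightarrow> real"
  assumes K: "continuous_on (ball 0 r) K"
  shows "continuous_on (ball 0 r \<times> {0..1}) (\<lambda>(p, t). t ^ n * K (fst p, t * snd p))"
proof -
  have "continuous_on (ball 0 r \<times> {0..1}) (\<lambda>z. K (fst (fst z), snd z * snd (fst z)))"
    by (rule continuous_on_compose2 [OF K])
      (auto intro!: continuous_intros vertical_contraction_in_ball)
  then show ?thesis
    by (auto intro!: continuous_intros simp: case_prod_beta)
qed

lemma integrable_hadamard_integrand:
  fixes K :: "real \<times> real \<Rightarrow> real"
  assumes K: "continuous_on (ball 0 r) K" and p: "p \<in> ball 0 r"
  shows "(\<lambda>t. t ^ n * K (fst p, t * snd p)) integrable_on {0..1}"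
proof -
  have "continuous_on {0..1} (\<lambda>t. (\<lambda>(p, t). t ^ n * K (fst p, t * snd p)) (p, t))"
    by (rule continuous_on_compose2 [OF continuous_on_hadamard_integrand [OF K]])
      (use p in \<open>auto intro!: continuous_intros\<close>)
  then show ?thesis
    by (simp add: integrable_continuous_interval)
qed

lemma has_derivative_hadamard_integrand:
  fixes K :: "real \<times> real \<Rightarrow> real"
  assumes K: "K differentiable (at (fst p, t * snd p))"
  shows "((\<lambda>p. t ^ n * K (fst p, t * snd p)) has_derivative
     (\<lambda>h. t ^ n * dd [(1, 0)] K (fst p, t * snd p) * fst h
          + t ^ Suc n * dd [(0, 1)] K (fst p, t * snd p) * snd h)) (at p)"
proof -
  have contraction: "((\<lambda>p. (fst p, t * snd p)) has_derivative (\<lambda>h. (fst h, t * snd h))) (at p)"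
    by (auto intro!: derivative_eq_intros)
  have "dd [(fst h, t * snd h)] K (fst p, t * snd p)
      = fst h * dd [(1, 0)] K (fst p, t * snd p) + t * snd h * dd [(0, 1)] K (fst p, t * snd p)"
    for h :: "real \<times> real"
    using dd_Pair_expansion [OF K, of "fst h" "t * snd h"] by simp
  then have "((\<lambda>p. K (fst p, t * snd p)) has_derivative (\<lambda>h. fst h * dd [(1, 0)] K (fst p, t * snd p)
      + t * snd h * dd [(0, 1)] K (fst p, t * snd p))) (at p)"
    using diff_chain_at [OF contraction has_derivative_dd [OF K]] by (simp add: o_def)
  from has_derivative_mult_right [OF this, of "t ^ n"] show ?thesis
    by (rule has_derivative_eq_rhs) (simp add: fun_eq_iff algebra_simps)
qed

lemma has_derivative_hadamard_integral:
  assumes K: "smooth_on (ball 0 r) K" and p0: "p0 \<in> ball 0 r"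
  shows "(hadamard_integral n K has_derivative
     (\<lambda>h. fst h * hadamard_integral n (dd [(1, 0)] K) p0
          + snd h * hadamard_integral (Suc n) (dd [(0, 1)] K) p0)) (at p0)"
proof -
  define K1 K2 where "K1 = dd [(1, 0)] K" and "K2 = dd [(0, 1)] K"
  have cont: "continuous_on (ball 0 r) K" "continuous_on (ball 0 r) K1" "continuous_on (ball 0 r) K2"
    unfolding K1_def K2_def using K by (auto intro: smooth_on_continuous smooth_on_dd)
  define fx :: "real \<times> real \<Rightarrow> real \<Rightarrow> (real \<times> real) \<Rightarrow>\<^sub>L real"
    where "fx p t = (t ^ n * K1 (fst p, t * snd p)) *\<^sub>R fst_blinfun
      + (t ^ Suc n * K2 (fst p, t * snd p)) *\<^sub>R snd_blinfun" for p t
  have fx_apply: "blinfun_apply (fx p t) h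
      = t ^ n * K1 (fst p, t * snd p) * fst h + t ^ Suc n * K2 (fst p, t * snd p) * snd h" for p t h
    by (simp add: fx_def plus_blinfun.rep_eq scaleR_blinfun.rep_eq)
  have partial: "((\<lambda>p. t ^ n * K (fst p, t * snd p)) has_derivative blinfun_apply (fx p t)) (at p)"
    if "p \<in> ball 0 r" "t \<in> {0..1}" for p t
    using has_derivative_hadamard_integrand
      [OF smooth_on_differentiable [OF K vertical_contraction_in_ball [OF that]], of n]
    by (rule has_derivative_eq_rhs) (simp add: fun_eq_iff fx_apply K1_def K2_def)
  have "((\<lambda>p. integral (cbox 0 1) (\<lambda>t. t ^ n * K (fst p, t * snd p))) has_derivative
      integral (cbox 0 1) (fx p0)) (at p0 within ball 0 r)"
  proof (rule leibniz_rule)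
    show "((\<lambda>p. t ^ n * K (fst p, t * snd p)) has_derivative blinfun_apply (fx p t)) (at p within ball 0 r)"
      if "p \<in> ball 0 r" "t \<in> cbox 0 1" for p t
      using partial [of p t] that by (simp add: has_derivative_at_withinI)
    show "(\<lambda>t. t ^ n * K (fst p, t * snd p)) integrable_on cbox 0 1" if "p \<in> ball 0 r" for p
      using integrable_hadamard_integrand [OF cont(1) that] by simp
    have "continuous_on (ball 0 r \<times> {0..1})
        (\<lambda>z. (\<lambda>(p, t). t ^ n * K1 (fst p, t * snd p)) z *\<^sub>R fst_blinfun
           + (\<lambda>(p, t). t ^ Suc n * K2 (fst p, t * snd p)) z *\<^sub>R snd_blinfun)"
      by (intro continuous_on_add continuous_on_scaleR continuous_on_const
          continuous_on_hadamard_integrand cont)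
    then show "continuous_on (ball 0 r \<times> cbox 0 1) (\<lambda>(p, t). fx p t)"
      by (simp add: fx_def case_prod_beta)
  qed (use p0 in auto)
  then have D: "(hadamard_integral n K has_derivative blinfun_apply (integral {0..1} (fx p0))) (at p0)"
    using at_within_open [OF p0 open_ball] by (simp add: hadamard_integral_def [abs_def])
  have int1: "(\<lambda>t. t ^ n * K1 (fst p0, t * snd p0)) integrable_on {0..1}"
    and int2: "(\<lambda>t. t ^ Suc n * K2 (fst p0, t * snd p0)) integrable_on {0..1}"
    using integrable_hadamard_integrand [OF cont(2) p0] integrable_hadamard_integrand [OF cont(3) p0] .
  have "fx p0 integrable_on {0..1}"
    unfolding fx_def by (intro integrable_add integrable_on_scaleR_left int1 int2)
  then have "blinfun_apply (integral {0..1} (fx p0)) h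
      = integral {0..1} (\<lambda>t. t ^ n * K1 (fst p0, t * snd p0) * fst h
          + t ^ Suc n * K2 (fst p0, t * snd p0) * snd h)" for h :: "real \<times> real"
    by (simp add: blinfun_apply_integral fx_apply)
  also have "\<dots> h = fst h * hadamard_integral n K1 p0 + snd h * hadamard_integral (Suc n) K2 p0" for h
    using integrable_on_mult_left [OF int1, of "fst h"] integrable_on_mult_left [OF int2, of "snd h"]
    by (simp add: integral_add hadamard_integral_def mult.commute)
  finally have "blinfun_apply (integral {0..1} (fx p0)) h
      = fst h * hadamard_integral n K1 p0 + snd h * hadamard_integral (Suc n) K2 p0" for h .
  then have "blinfun_apply (integral {0..1} (fx p0))
      = (\<lambda>h. fst h * hadamard_integral n K1 p0 + snd h * hadamard_integral (Suc n) K2 p0)"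
    by (rule ext)
  with D show ?thesis
    unfolding K1_def K2_def by simp
qed

lemma smooth_on_hadamard_integral:
  assumes "smooth_on (ball 0 r) K"
  shows "smooth_on (ball 0 r) (hadamard_integral n K)"
proof -
  have "differentiable_upto k (ball 0 r) (hadamard_integral n K)"
    if "smooth_on (ball 0 r) K" for k n K
    using that
  proof (induction k arbitrary: n K)
    case (Suc k)
    show ?case
    proof (rule differentiable_upto_SucI [where D = "\<lambda>h p. fst h * hadamard_integral n (dd [(1, 0)] K) p
        + snd h * hadamard_integral (Suc n) (dd [(0, 1)] K) p"])
      show "(hadamard_integral n K has_derivative (\<lambda>h. fst h * hadamard_integral n (dd [(1, 0)] K) p
          + snd h * hadamard_integral (Suc n) (dd [(0, 1)] K) p)) (at p)"
        if "p \<in> ball 0 r" for p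
        by (rule has_derivative_hadamard_integral [OF Suc.prems that])
      show "differentiable_upto k (ball 0 r) (\<lambda>p. fst h * hadamard_integral n (dd [(1, 0)] K) p
          + snd h * hadamard_integral (Suc n) (dd [(0, 1)] K) p)" for h
        using Suc.prems
        by (intro differentiable_upto_add differentiable_upto_mult differentiable_upto_const
            Suc.IH smooth_on_dd) simp_all
    qed simp
  qed simp
  with assms show ?thesis
    by (simp add: smooth_on_iff_differentiable_upto)
qed

lemma hadamard_lemma_ball:
  fixes F :: "real \<times> real \<Rightarrow> real"
  assumes F: "smooth_on (ball 0 r) F" and axis: "\<And>u. \<bar>u\<bar> < r \<Longrightarrow> F (u, 0) = 0"
  obtains G where "smooth_on (ball 0 r) G" "\<And>p. p \<in> ball 0 r \<Longrightarrow> F p = snd p * G p"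
proof
  show "smooth_on (ball 0 r) (hadamard_integral 0 (dd [(0, 1)] F))"
    by (rule smooth_on_hadamard_integral [OF smooth_on_dd [OF F]])
  fix p :: "real \<times> real" assume p: "p \<in> ball 0 r"
  obtain u w where uw: "p = (u, w)"
    by (cases p)
  have deriv: "((\<lambda>t. F (u, t * w)) has_vector_derivative w * dd [(0, 1)] F (u, t * w))
      (at t within {0..1})" if t: "t \<in> {0..1}" for t
  proof -
    have Fd: "F differentiable (at (u, t * w))"
      using smooth_on_differentiable [OF F vertical_contraction_in_ball [OF p t]] by (simp add: uw)
    have line: "((\<lambda>t. (u, t * w)) has_derivative (\<lambda>s. (0, s * w))) (at t)"
      by (auto intro!: derivative_eq_intros)
    have "dd [(0, s * w)] F (u, t * w) = s * (w * dd [(0, 1)] F (u, t * w))" for s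
      using dd_Pair_expansion [OF Fd, of 0 "s * w"] by simp
    then have "((\<lambda>t. F (u, t * w)) has_derivative (\<lambda>s. s * (w * dd [(0, 1)] F (u, t * w)))) (at t)"
      using diff_chain_at [OF line has_derivative_dd [OF Fd]] by (simp add: o_def)
    then show ?thesis
      by (simp add: has_vector_derivative_def has_derivative_at_withinI)
  qed
  have "((\<lambda>t. w * dd [(0, 1)] F (u, t * w)) has_integral F (u, 1 * w) - F (u, 0 * w)) {0..1}"
    by (rule fundamental_theorem_of_calculus [OF _ deriv]) simp_all
  moreover have "\<bar>u\<bar> < r"
    using vertical_contraction_in_ball [OF p, of 0] by (simp add: uw)
  then have "F (u, 0) = 0"
    by (rule axis)
  ultimately have "((\<lambda>t. w * dd [(0, 1)] F (u, t * w)) has_integral F (u, w)) {0..1}"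
    by simp
  then have "integral {0..1} (\<lambda>t. w * dd [(0, 1)] F (u, t * w)) = F (u, w)"
    by (rule integral_unique)
  then show "F p = snd p * hadamard_integral 0 (dd [(0, 1)] F) p"
    by (simp add: uw hadamard_integral_def)
qed

lemma dd_vertical_of_factor_through_graph:
  fixes F G :: "real \<times> real \<Rightarrow> real" and \<phi> :: "real \<Rightarrow> real"
  assumes W: "open W" "p \<in> W" and graph: "snd p = \<phi> (fst p)"
    and \<phi>: "\<phi> differentiable (at (fst p))" and G: "G differentiable (at p)"
    and factor: "\<And>q. q \<in> W \<Longrightarrow> F q = (snd q - \<phi> (fst q)) * G q"
  shows "dd [(0, 1)] F p = G p"
proof -
  have lin: "linear (\<lambda>k. dd [k] \<phi> (fst p))"
    using has_derivative_linear [OF has_derivative_dd [OF \<phi>]] .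
  have "((\<lambda>q. \<phi> (fst q)) has_derivative (\<lambda>h. dd [fst h] \<phi> (fst p))) (at p)"
    using diff_chain_at [OF has_derivative_fst [OF has_derivative_ident] has_derivative_dd [OF \<phi>]]
    by (simp add: o_def)
  then have "((\<lambda>q. (snd q - \<phi> (fst q)) * G q) has_derivative
      (\<lambda>h. (snd p - \<phi> (fst p)) * dd [h] G p + (snd h - dd [fst h] \<phi> (fst p)) * G p)) (at p)"
    by (intro has_derivative_mult has_derivative_diff has_derivative_snd has_derivative_ident
        has_derivative_dd G)
  then have "dd [(0, 1)] (\<lambda>q. (snd q - \<phi> (fst q)) * G q) p = G p"
    using graph linear_0 [OF lin] by (simp add: dd_eq_derivative)
  moreover have "dd [(0, 1)] F p = dd [(0, 1)] (\<lambda>q. (snd q - \<phi> (fst q)) * G q) p"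
    using dd_cong_open [OF W(1) factor W(2)] .
  ultimately show ?thesis
    by simp
qed

lemma hadamard_lemma_axis:
  fixes F :: "real \<times> real \<Rightarrow> real"
  assumes F: "smooth_on S F" "(0, 0) \<in> S" and axis: "eventually (\<lambda>u. F (u, 0) = 0) (nhds 0)"
  obtains r G where "r > 0" "ball 0 r \<subseteq> S" "smooth_on (ball 0 r) G"
    "\<And>p. p \<in> ball 0 r \<Longrightarrow> F p = snd p * G p"
proof -
  obtain e where e: "e > 0" "\<And>u. \<bar>u\<bar> < e \<Longrightarrow> F (u, 0) = 0"
    using axis by (auto simp: eventually_nhds_metric dist_real_def)
  obtain r0 where r0: "r0 > 0" "ball 0 r0 \<subseteq> S"
    using F smooth_on_open open_contains_ball_eq by (metis zero_prod_def)
  define r where "r = min r0 e"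
  have r: "r > 0" "ball 0 r \<subseteq> S"
    using r0 e by (auto simp: r_def)
  have "smooth_on (ball 0 r) F"
    using smooth_on_subset [OF F(1) open_ball r(2)] .
  moreover have "F (u, 0) = 0" if "\<bar>u\<bar> < r" for u
    using that e(2) by (simp add: r_def)
  ultimately obtain G where "smooth_on (ball 0 r) G" "\<And>p. p \<in> ball 0 r \<Longrightarrow> F p = snd p * G p"
    using hadamard_lemma_ball by blast
  with r that show ?thesis
    by blast
qed

lemma smooth_on_shear:
  fixes \<phi> :: "real \<Rightarrow> real"
  assumes "smooth_on I \<phi>"
  shows "smooth_on (I \<times> UNIV) (\<lambda>p. (fst p, snd p + c * \<phi> (fst p)))"
proof -
  have J: "open (I \<times> (UNIV :: real set))"
    using smooth_on_open [OF assms] by (simp add: open_Times)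
  have "smooth_on (I \<times> (UNIV :: real set)) (\<lambda>p. \<phi> (fst p))"
    by (rule smooth_on_compose [OF smooth_on_bounded_linear [OF J bounded_linear_fst] assms]) auto
  moreover have "smooth_on (I \<times> (UNIV :: real set)) fst" "smooth_on (I \<times> (UNIV :: real set)) snd"
    using J by (simp_all add: smooth_on_bounded_linear bounded_linear_fst bounded_linear_snd)
  ultimately show ?thesis
    using J by (intro smooth_on_Pair smooth_on_add smooth_on_mult smooth_on_const) simp_all
qed

text \<open>Shearing by \<open>(u, w) \<mapsto> (u, w + \<phi> u)\<close> straightens the graph of \<open>\<phi>\<close> to the axis
  \<open>w = 0\<close>.\<close>
lemma hadamard_lemma_graph:
  fixes F :: "real \<times> real \<Rightarrow> real" and \<phi> :: "real \<Rightarrow> real"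
  assumes F: "smooth_on S F" "(0, 0) \<in> S"
    and \<phi>: "smooth_on I \<phi>" "0 \<in> I" "\<phi> 0 = 0"
    and graph: "eventually (\<lambda>u. F (u, \<phi> u) = 0) (nhds 0)"
  obtains W G where "(0, 0) \<in> W" "W \<subseteq> S" "smooth_on W G"
    "\<And>p. p \<in> W \<Longrightarrow> F p = (snd p - \<phi> (fst p)) * G p" "G (0, 0) = dd [(0, 1)] F (0, 0)"
proof -
  define \<sigma> \<tau> :: "real \<times> real \<Rightarrow> real \<times> real"
    where "\<sigma> p = (fst p, snd p + \<phi> (fst p))" and "\<tau> p = (fst p, snd p - \<phi> (fst p))" for p
  define J where "J = I \<times> (UNIV :: real set)"
  have \<sigma>: "smooth_on J \<sigma>" and \<tau>: "smooth_on J \<tau>"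
    using smooth_on_shear [OF \<phi>(1), of 1] smooth_on_shear [OF \<phi>(1), of "- 1"]
    by (simp_all add: J_def \<sigma>_def [abs_def] \<tau>_def [abs_def])
  have \<sigma>\<tau>: "\<sigma> (\<tau> p) = p" for p
    by (simp add: \<sigma>_def \<tau>_def)
  define S' where "S' = J \<inter> \<sigma> -` S"
  have "open S'"
    using continuous_open_preimage [OF smooth_on_continuous [OF \<sigma>] smooth_on_open [OF \<sigma>]
        smooth_on_open [OF F(1)]] by (simp add: S'_def)
  then have "smooth_on S' (\<lambda>p. F (\<sigma> p))"
    by (intro smooth_on_compose [OF smooth_on_subset [OF \<sigma>] F(1)]) (auto simp: S'_def)
  moreover have "(0, 0) \<in> S'"
    using F(2) \<phi>(2,3) by (simp add: S'_def J_def \<sigma>_def)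
  moreover have "eventually (\<lambda>u. F (\<sigma> (u, 0)) = 0) (nhds 0)"
    using graph by (simp add: \<sigma>_def)
  ultimately obtain r G0 where r: "r > 0" "ball 0 r \<subseteq> S'" and G0: "smooth_on (ball 0 r) G0"
      "\<And>p. p \<in> ball 0 r \<Longrightarrow> F (\<sigma> p) = snd p * G0 p"
    by (rule hadamard_lemma_axis) blast
  define W where "W = J \<inter> \<tau> -` ball 0 r"
  have W: "open W" "(0, 0) \<in> W"
    using continuous_open_preimage [OF smooth_on_continuous [OF \<tau>] smooth_on_open [OF \<tau>] open_ball]
      \<phi>(2,3) r(1) by (simp_all add: W_def J_def \<tau>_def)
  have factor: "F p = (snd p - \<phi> (fst p)) * G0 (\<tau> p)" if "p \<in> W" for p
  proof -
    have "F p = F (\<sigma> (\<tau> p))"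
      by (simp only: \<sigma>\<tau>)
    also have "\<dots> = snd (\<tau> p) * G0 (\<tau> p)"
      using that by (intro G0(2)) (simp add: W_def)
    finally show ?thesis
      by (simp add: \<tau>_def)
  qed
  have G: "smooth_on W (\<lambda>p. G0 (\<tau> p))"
    by (rule smooth_on_compose [OF smooth_on_subset [OF \<tau> W(1)] G0(1)]) (auto simp: W_def)
  show ?thesis
  proof
    show "W \<subseteq> S"
      using r(2) \<sigma>\<tau> by (force simp: W_def S'_def)
    have "dd [(0, 1)] F (0, 0) = G0 (\<tau> (0, 0))"
      by (rule dd_vertical_of_factor_through_graph [where \<phi> = \<phi> and G = "\<lambda>p. G0 (\<tau> p)"])
        (use W \<phi> smooth_on_differentiable [OF \<phi>(1)] smooth_on_differentiable [OF G W(2)] factor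
          in simp_all)
    then show "G0 (\<tau> (0, 0)) = dd [(0, 1)] F (0, 0)" ..
  qed (use W(2) G factor in simp_all)
qed

section \<open>The frontal criterion\<close>

definition unit_normal_on :: "(real \<times> real) set \<Rightarrow> (real \<times> real \<Rightarrow> real) \<Rightarrow>
    (real \<times> real \<Rightarrow> real) \<Rightarrow> (real \<times> real \<Rightarrow> real \<times> real \<times> real) \<Rightarrow> bool" where
  "unit_normal_on W f2 f3 \<nu> \<longleftrightarrow> smooth_on W \<nu> \<and> (\<forall>q\<in>W. norm (\<nu> q) = 1) \<and>
     (\<forall>q\<in>W. \<forall>X. inner (fst X, dd [X] f2 q, dd [X] f3 q) (\<nu> q) = 0)"

lemma smooth_on_graph_map_components:
  fixes f2 f3 :: "real \<times> real \<Rightarrow> real"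
  assumes "smooth_on U (\<lambda>(u, v). (u, f2 (u, v), f3 (u, v)))"
  shows "smooth_on U f2" "smooth_on U f3"
  using smooth_on_bounded_linear_compose
      [OF bounded_linear_compose [OF bounded_linear_fst bounded_linear_snd] assms]
    smooth_on_bounded_linear_compose
      [OF bounded_linear_compose [OF bounded_linear_snd bounded_linear_snd] assms]
  by (simp_all add: case_prod_beta)

lemma frechet_derivative_graph_map:
  fixes f2 f3 :: "real \<times> real \<Rightarrow> real"
  assumes "f2 differentiable (at p)" "f3 differentiable (at p)"
  shows "frechet_derivative (\<lambda>(u, v). (u, f2 (u, v), f3 (u, v))) (at p) X
    = (fst X, dd [X] f2 p, dd [X] f3 p)"
proof -
  have "((\<lambda>(u, v). (u, f2 (u, v), f3 (u, v))) has_derivative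
      (\<lambda>X. (fst X, dd [X] f2 p, dd [X] f3 p))) (at p)"
    unfolding case_prod_beta using assms
    by (intro has_derivative_Pair has_derivative_fst has_derivative_ident)
      (simp_all add: has_derivative_dd)
  then show ?thesis
    by (simp add: frechet_derivative_at [symmetric])
qed

lemma frontal_near0_iff_unit_normal:
  fixes f2 f3 :: "real \<times> real \<Rightarrow> real"
  assumes f2: "smooth_on U0 f2" and f3: "smooth_on U0 f3" and U0: "(0, 0) \<in> U0"
  shows "frontal_near0 (\<lambda>(u, v). (u, f2 (u, v), f3 (u, v))) \<longleftrightarrow>
    (\<exists>W \<nu>. (0, 0) \<in> W \<and> W \<subseteq> U0 \<and> unit_normal_on W f2 f3 \<nu>)"
proof -
  have Df: "frechet_derivative (\<lambda>(u, v). (u, f2 (u, v), f3 (u, v))) (at q) X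
      = (fst X, dd [X] f2 q, dd [X] f3 q)" if "q \<in> U0" for q X
    using smooth_on_differentiable [OF f2 that] smooth_on_differentiable [OF f3 that]
    by (rule frechet_derivative_graph_map)
  show ?thesis
  proof
    assume "frontal_near0 (\<lambda>(u, v). (u, f2 (u, v), f3 (u, v)))"
    then obtain U \<nu> where U: "0 \<in> U" "smooth_on U \<nu>" "\<forall>q\<in>U. norm (\<nu> q) = 1"
        "\<forall>q\<in>U. \<forall>X. inner (frechet_derivative (\<lambda>(u, v). (u, f2 (u, v), f3 (u, v))) (at q) X) (\<nu> q) = 0"
      unfolding frontal_near0_def by blast
    have "open (U \<inter> U0)"
      using smooth_on_open [OF U(2)] smooth_on_open [OF f2] by blast
    then have "smooth_on (U \<inter> U0) \<nu>"
      using smooth_on_subset [OF U(2)] by blast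
    moreover have "inner (fst X, dd [X] f2 q, dd [X] f3 q) (\<nu> q) = 0" if "q \<in> U \<inter> U0" for q X
    proof -
      have "inner (frechet_derivative (\<lambda>(u, v). (u, f2 (u, v), f3 (u, v))) (at q) X) (\<nu> q) = 0"
        using U(4) that by blast
      then show ?thesis
        using Df [of q X] that by simp
    qed
    ultimately have "unit_normal_on (U \<inter> U0) f2 f3 \<nu>"
      using U(3) by (simp add: unit_normal_on_def)
    moreover have "(0, 0) \<in> U \<inter> U0"
      using U(1) U0 by (simp add: zero_prod_def)
    ultimately show "\<exists>W \<nu>. (0, 0) \<in> W \<and> W \<subseteq> U0 \<and> unit_normal_on W f2 f3 \<nu>"
      by blast
  next
    assume "\<exists>W \<nu>. (0, 0) \<in> W \<and> W \<subseteq> U0 \<and> unit_normal_on W f2 f3 \<nu>"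
    then obtain W \<nu> where W: "(0, 0) \<in> W" "W \<subseteq> U0" "unit_normal_on W f2 f3 \<nu>"
      by blast
    have "inner (frechet_derivative (\<lambda>(u, v). (u, f2 (u, v), f3 (u, v))) (at q) X) (\<nu> q) = 0"
      if "q \<in> W" for q X
    proof -
      have "inner (fst X, dd [X] f2 q, dd [X] f3 q) (\<nu> q) = 0"
        using W(3) that unfolding unit_normal_on_def by blast
      then show ?thesis
        using Df [of q X] that W(2) by auto
    qed
    then show "frontal_near0 (\<lambda>(u, v). (u, f2 (u, v), f3 (u, v)))"
      unfolding frontal_near0_def using W(1,3)
      by (intro exI [of _ W] exI [of _ \<nu>]) (simp add: unit_normal_on_def zero_prod_def)
  qed
qed

lemma inner_dd_eq_zero_if_orthogonal:
  fixes F \<nu> :: "'a::real_normed_vector \<Rightarrow> 'b::real_inner"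
  assumes U: "open U" "p \<in> U" and orthogonal: "\<And>q. q \<in> U \<Longrightarrow> inner (F q) (\<nu> q) = 0"
    and "F p = 0" "F differentiable (at p)" "\<nu> differentiable (at p)"
  shows "inner (dd [h] F p) (\<nu> p) = 0"
proof -
  have "((\<lambda>q. inner (F q) (\<nu> q)) has_derivative
      (\<lambda>h. inner (F p) (dd [h] \<nu> p) + inner (dd [h] F p) (\<nu> p))) (at p)"
    using assms by (intro has_derivative_inner has_derivative_dd)
  then have "dd [h] (\<lambda>q. inner (F q) (\<nu> q)) p = inner (dd [h] F p) (\<nu> p)"
    using \<open>F p = 0\<close> by (simp add: dd_eq_derivative)
  moreover have "dd [h] (\<lambda>q. inner (F q) (\<nu> q)) p = dd [h] (\<lambda>q. 0) p"
    using dd_cong_open [OF U(1) orthogonal U(2)] .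
  moreover have "dd [h] (\<lambda>q. 0 :: real) p = 0"
    using dd_eq_derivative [OF has_derivative_const] .
  ultimately show ?thesis
    by simp
qed

text \<open>At a point where \<open>f\<^sub>v = 0\<close> the normal is also orthogonal to \<open>f\<^sub>v\<^sub>v\<close>. If its
  third component vanished, \<open>(f\<^sub>2)\<^sub>v\<^sub>v \<noteq> 0\<close> would force the second to vanish, and
  orthogonality to \<open>f\<^sub>u = (1, _, _)\<close> the first.\<close>
lemma unit_normal_third_component_nonzero:
  fixes f2 f3 :: "real \<times> real \<Rightarrow> real" and \<nu> :: "real \<times> real \<Rightarrow> real \<times> real \<times> real"
  assumes \<nu>: "unit_normal_on W f2 f3 \<nu>" "p \<in> W"
    and f2: "dd [(0, 1)] f2 differentiable (at p)" "dd [(0, 1)] f2 p = 0"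
      "dd [(0, 1)] (dd [(0, 1)] f2) p \<noteq> 0"
    and f3: "dd [(0, 1)] f3 differentiable (at p)" "dd [(0, 1)] f3 p = 0"
  shows "snd (snd (\<nu> p)) \<noteq> 0"
proof
  assume \<nu>3: "snd (snd (\<nu> p)) = 0"
  have W: "open W" and \<nu>d: "\<nu> differentiable (at p)" and "\<nu> p \<noteq> 0"
    and normal: "\<And>q X. q \<in> W \<Longrightarrow> inner (fst X, dd [X] f2 q, dd [X] f3 q) (\<nu> q) = 0"
    using \<nu> smooth_on_open smooth_on_differentiable by (fastforce simp: unit_normal_on_def)+
  define F where "F q = (dd [(0, 1)] f2 q, dd [(0, 1)] f3 q)" for q
  have F': "(F has_derivative (\<lambda>h. (dd [h] (dd [(0, 1)] f2) p, dd [h] (dd [(0, 1)] f3) p))) (at p)"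
    unfolding F_def using f2(1) f3(1) by (intro has_derivative_Pair has_derivative_dd)
  have "inner (dd [(0, 1)] F p) (snd (\<nu> p)) = 0"
  proof (rule inner_dd_eq_zero_if_orthogonal [OF W \<nu>(2)])
    show "inner (F q) (snd (\<nu> q)) = 0" if "q \<in> W" for q
      using normal [OF that, of "(0, 1)"] by (cases "\<nu> q") (simp add: F_def)
    show "F p = 0"
      using f2(2) f3(2) by (simp add: F_def zero_prod_def)
    show "F differentiable (at p)"
      using F' by (rule differentiableI)
    show "(\<lambda>q. snd (\<nu> q)) differentiable (at p)"
      using has_derivative_snd [OF has_derivative_dd [OF \<nu>d]] by (rule differentiableI)
  qed
  then have "dd [(0, 1)] (dd [(0, 1)] f2) p * fst (snd (\<nu> p)) = 0"
    using \<nu>3 dd_eq_derivative [OF F'] by (cases "snd (\<nu> p)") simp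
  then have \<nu>2: "fst (snd (\<nu> p)) = 0"
    using f2(3) by simp
  have "fst (\<nu> p) = 0"
    using normal [OF \<nu>(2), of "(1, 0)"] \<nu>2 \<nu>3 by (cases "\<nu> p") simp
  with \<nu>2 \<nu>3 \<open>\<nu> p \<noteq> 0\<close> show False
    by (cases "\<nu> p") (simp add: zero_prod_def)
qed

lemma critical_curve_vanishing_if_unit_normal:
  fixes f2 f3 :: "real \<times> real \<Rightarrow> real" and \<nu> :: "real \<times> real \<Rightarrow> real \<times> real \<times> real"
    and vf :: "real \<Rightarrow> real"
  assumes \<nu>: "unit_normal_on W f2 f3 \<nu>" "(0, 0) \<in> W" "W \<subseteq> S"
    and f2: "smooth_on S f2" and f3: "smooth_on S f3"
    and vf: "continuous (at 0) vf" "vf 0 = 0"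
    and crit: "eventually (\<lambda>u. dd [(0, 1)] f2 (u, vf u) = 0) (nhds 0)"
    and f3v: "dd [(0, 1)] f3 (0, 0) = 0" and f2vv: "dd [(0, 1)] (dd [(0, 1)] f2) (0, 0) \<noteq> 0"
  shows "eventually (\<lambda>u. dd [(0, 1)] f3 (u, vf u) = 0) (nhds 0)"
proof -
  have "dd [(0, 1)] f2 (0, 0) = 0"
    using eventually_nhds_x_imp_x [OF crit] vf(2) by simp
  then have "snd (snd (\<nu> (0, 0))) \<noteq> 0"
    using \<nu> f2vv f3v
    by (intro unit_normal_third_component_nonzero [OF \<nu>(1,2)]
        smooth_on_differentiable [OF smooth_on_dd [OF f2]]
        smooth_on_differentiable [OF smooth_on_dd [OF f3]]) auto
  moreover have \<nu>W: "smooth_on W \<nu>"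
    using \<nu>(1) by (simp add: unit_normal_on_def)
  moreover have "continuous_on W (\<lambda>q. snd (snd (\<nu> q)))"
    using smooth_on_continuous [OF \<nu>W] by (intro continuous_intros)
  moreover have "open W"
    using smooth_on_open [OF \<nu>W] .
  moreover define N where "N = W \<inter> (\<lambda>q. snd (snd (\<nu> q))) -` (- {0})"
  ultimately have N: "open N" "(0, 0) \<in> N"
    using continuous_open_preimage [of W "\<lambda>q. snd (snd (\<nu> q))" "- {0}"] \<nu>(2)
    by (auto simp: N_def)
  have "continuous (at 0) (\<lambda>u. (u, vf u))"
    using vf(1) by (intro continuous_intros)
  then have "eventually (\<lambda>u. (u, vf u) \<in> N) (nhds 0)"
    using N vf(2) by (auto simp: continuous_at_open eventually_nhds)
  then show ?thesis
    using crit
  proof eventually_elim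
    case (elim u)
    then have "(u, vf u) \<in> W"
      by (simp add: N_def)
    then have "inner (fst (0 :: real, 1 :: real), dd [(0, 1)] f2 (u, vf u), dd [(0, 1)] f3 (u, vf u))
        (\<nu> (u, vf u)) = 0"
      using \<nu>(1) unfolding unit_normal_on_def by blast
    then have "dd [(0, 1)] f3 (u, vf u) * snd (snd (\<nu> (u, vf u))) = 0"
      using elim by (cases "\<nu> (u, vf u)") simp
    with elim show ?case
      by (simp add: N_def)
  qed
qed

text \<open>The normal \<open>N\<close> below is orthogonal to \<open>f\<^sub>u = (1, (f\<^sub>2)\<^sub>u, (f\<^sub>3)\<^sub>u)\<close> and to
  \<open>f\<^sub>v = c (0, a, b)\<close>.\<close>
lemma unit_normal_of_vertical_factorization:
  fixes f2 f3 a b c :: "real \<times> real \<Rightarrow> real"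
  assumes f2: "smooth_on W f2" and f3: "smooth_on W f3"
    and a: "smooth_on W a" "\<And>q. q \<in> W \<Longrightarrow> a q \<noteq> 0" and b: "smooth_on W b"
    and factor2: "\<And>q. q \<in> W \<Longrightarrow> dd [(0, 1)] f2 q = c q * a q"
    and factor3: "\<And>q. q \<in> W \<Longrightarrow> dd [(0, 1)] f3 q = c q * b q"
  shows "unit_normal_on W f2 f3
    (\<lambda>q. sgn (dd [(1, 0)] f2 q * b q - dd [(1, 0)] f3 q * a q, - b q, a q))"
proof -
  define N where "N q = (dd [(1, 0)] f2 q * b q - dd [(1, 0)] f3 q * a q, - b q, a q)" for q
  have smooth_N: "smooth_on W N"
    unfolding N_def using smooth_on_dd [OF f2] smooth_on_dd [OF f3] a(1) b
    by (intro smooth_on_Pair smooth_on_diff smooth_on_mult smooth_on_minus)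
  have N0: "N q \<noteq> 0" if "q \<in> W" for q
    using a(2) [OF that] by (simp add: N_def zero_prod_def)
  have orthogonal: "inner (fst X, dd [X] f2 q, dd [X] f3 q) (N q) = 0" if q: "q \<in> W" for q X
  proof -
    obtain x1 x2 where X: "X = (x1, x2)"
      by (cases X)
    have e2: "dd [(x1, x2)] f2 q = x1 * dd [(1, 0)] f2 q + x2 * (c q * a q)"
      using dd_Pair_expansion [OF smooth_on_differentiable [OF f2 q], of x1 x2] factor2 [OF q]
      by simp
    have e3: "dd [(x1, x2)] f3 q = x1 * dd [(1, 0)] f3 q + x2 * (c q * b q)"
      using dd_Pair_expansion [OF smooth_on_differentiable [OF f3 q], of x1 x2] factor3 [OF q]
      by simp
    show ?thesis
      unfolding X N_def e2 e3 by (simp add: algebra_simps)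
  qed
  have "unit_normal_on W f2 f3 (\<lambda>q. sgn (N q))"
    unfolding unit_normal_on_def
  proof (intro conjI ballI allI)
    show "smooth_on W (\<lambda>q. sgn (N q))"
      using smooth_N N0 by (rule smooth_on_sgn)
    show "norm (sgn (N q)) = 1" if "q \<in> W" for q
      using N0 [OF that] by (simp add: norm_sgn)
    show "inner (fst X, dd [X] f2 q, dd [X] f3 q) (sgn (N q)) = 0" if "q \<in> W" for q X
      using orthogonal [OF that] by (simp add: sgn_div_norm)
  qed
  then show ?thesis
    by (simp only: N_def)
qed

lemma unit_normal_if_critical_curve_vanishing:
  fixes f2 f3 :: "real \<times> real \<Rightarrow> real" and vf :: "real \<Rightarrow> real"
  assumes f2: "smooth_on S f2" and f3: "smooth_on S f3" and S: "(0, 0) \<in> S"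
    and vf: "smooth_on I vf" "0 \<in> I" "vf 0 = 0"
    and crit2: "eventually (\<lambda>u. dd [(0, 1)] f2 (u, vf u) = 0) (nhds 0)"
    and crit3: "eventually (\<lambda>u. dd [(0, 1)] f3 (u, vf u) = 0) (nhds 0)"
    and f2vv: "dd [(0, 1)] (dd [(0, 1)] f2) (0, 0) \<noteq> 0"
  obtains W \<nu> where "(0, 0) \<in> W" "W \<subseteq> S" "unit_normal_on W f2 f3 \<nu>"
proof -
  obtain W2 a where W2: "(0, 0) \<in> W2" "W2 \<subseteq> S" "smooth_on W2 a"
      "\<And>q. q \<in> W2 \<Longrightarrow> dd [(0, 1)] f2 q = (snd q - vf (fst q)) * a q"
      "a (0, 0) = dd [(0, 1)] (dd [(0, 1)] f2) (0, 0)"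
    by (rule hadamard_lemma_graph [OF smooth_on_dd [OF f2] S vf crit2]) blast
  obtain W3 b where W3: "(0, 0) \<in> W3" "W3 \<subseteq> S" "smooth_on W3 b"
      "\<And>q. q \<in> W3 \<Longrightarrow> dd [(0, 1)] f3 q = (snd q - vf (fst q)) * b q"
    by (rule hadamard_lemma_graph [OF smooth_on_dd [OF f3] S vf crit3]) blast
  define W where "W = (W2 \<inter> W3) \<inter> a -` (- {0})"
  have "open (W2 \<inter> W3)"
    using smooth_on_open [OF W2(3)] smooth_on_open [OF W3(3)] by blast
  moreover have "continuous_on (W2 \<inter> W3) a"
    using smooth_on_continuous [OF W2(3)] by (rule continuous_on_subset) blast
  ultimately have "open W"
    using continuous_open_preimage [of "W2 \<inter> W3" a "- {0}"] by (auto simp: W_def)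
  have W: "(0, 0) \<in> W" "W \<subseteq> W2" "W \<subseteq> W3" "W \<subseteq> S"
    using W2(1,2,5) W3(1) f2vv by (auto simp: W_def)
  have restrict: "smooth_on W g" if "smooth_on T g" "W \<subseteq> T" for T and g :: "real \<times> real \<Rightarrow> real"
    using smooth_on_subset [OF that(1) \<open>open W\<close> that(2)] .
  have "unit_normal_on W f2 f3
      (\<lambda>q. sgn (dd [(1, 0)] f2 q * b q - dd [(1, 0)] f3 q * a q, - b q, a q))"
    using W W2(4) W3(4)
    by (intro unit_normal_of_vertical_factorization restrict [OF f2] restrict [OF f3]
        restrict [OF W2(3)] restrict [OF W3(3)]) (auto simp: W_def)
  with W that show ?thesis
    by blast
qed

theorem mainTheorem13:
  fixes f2 f3 :: "real \<times> real \<Rightarrow> real" and vf :: "real \<Rightarrow> real"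
  defines "f \<equiv> (\<lambda>(u, v). (u, f2 (u, v), f3 (u, v)))"
  assumes smooth: "smooth_near 0 f"
    and f0: "f (0, 0) = 0"
    and fv0: "frechet_derivative f (at (0, 0)) (0, 1) = 0"
    and jet: "A2_equiv f (\<lambda>(u, v). (u, v ^ 2, 0))"
    and f2vv: "dd [(0, 1), (0, 1)] f2 (0, 0) \<noteq> 0"
    and vsmooth: "smooth_near 0 vf"
    and v0: "vf 0 = 0"
    and vcrit: "\<exists>e>0. \<forall>u. \<bar>u\<bar> < e \<longrightarrow> dd [(0, 1)] f2 (u, vf u) = 0"
  shows "frontal_near0 f \<longleftrightarrow> (\<exists>e>0. \<forall>u. \<bar>u\<bar> < e \<longrightarrow> dd [(0, 1)] f3 (u, vf u) = 0)"
proof -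
  obtain U0 where U0: "(0, 0) \<in> U0" "smooth_on U0 f"
    using smooth by (auto simp: smooth_near_def zero_prod_def)
  have f2: "smooth_on U0 f2" and f3: "smooth_on U0 f3"
    using smooth_on_graph_map_components [OF U0(2) [unfolded f_def]] by simp_all
  obtain I where I: "0 \<in> I" "smooth_on I vf"
    using vsmooth by (auto simp: smooth_near_def)
  have vf: "continuous (at 0) vf"
    using smooth_on_differentiable [OF I(2,1)] by (rule differentiable_imp_continuous_within)
  have crit2: "eventually (\<lambda>u. dd [(0, 1)] f2 (u, vf u) = 0) (nhds 0)"
    using vcrit by (simp add: eventually_nhds_metric dist_real_def)
  have "frechet_derivative f (at (0, 0)) (0, 1) = (0, dd [(0, 1)] f2 (0, 0), dd [(0, 1)] f3 (0, 0))"
    unfolding f_def using frechet_derivative_graph_map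
      [OF smooth_on_differentiable [OF f2 U0(1)] smooth_on_differentiable [OF f3 U0(1)]] by simp
  then have f3v: "dd [(0, 1)] f3 (0, 0) = 0"
    using fv0 by (simp add: zero_prod_def)
  have f2vv': "dd [(0, 1)] (dd [(0, 1)] f2) (0, 0) \<noteq> 0"
    using f2vv unfolding dd_Cons [of "(0, 1)" "[(0, 1)]"] .
  have "frontal_near0 f \<longleftrightarrow> eventually (\<lambda>u. dd [(0, 1)] f3 (u, vf u) = 0) (nhds 0)"
    unfolding f_def frontal_near0_iff_unit_normal [OF f2 f3 U0(1)]
  proof
    assume "\<exists>W \<nu>. (0, 0) \<in> W \<and> W \<subseteq> U0 \<and> unit_normal_on W f2 f3 \<nu>"
    then show "eventually (\<lambda>u. dd [(0, 1)] f3 (u, vf u) = 0) (nhds 0)"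
      using critical_curve_vanishing_if_unit_normal [OF _ _ _ f2 f3 vf v0 crit2 f3v f2vv'] by blast
  next
    assume "eventually (\<lambda>u. dd [(0, 1)] f3 (u, vf u) = 0) (nhds 0)"
    then show "\<exists>W \<nu>. (0, 0) \<in> W \<and> W \<subseteq> U0 \<and> unit_normal_on W f2 f3 \<nu>"
      by (rule unit_normal_if_critical_curve_vanishing [OF f2 f3 U0(1) I(2,1) v0 crit2 _ f2vv']) blast
  qed
  then show ?thesis
    by (simp add: eventually_nhds_metric dist_real_def)
qed

end
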